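(* Let $P$ be a path from $u$ to $v$ and $x\in P\setminus\{u,v\}$. Then the length of the $\epsilon_2$-segment containing $x$ satisfies $|\mathrm{seg}(x,P)|\le\epsilon_2\cdot\min\{|P[u,x]|,|P[x,v]|\}$.
   Context: Let $G$ be an undirected graph with real edge weights in $[1,W]$, and let $\epsilon_2>0$. For a path $P$ and vertices $a,b$ on it, $P[a,b]$ is the subpath between them and $|Q|$ denotes the (weighted) length of a path $Q$. For a path $P=(u=v_0,v_1,\dots,v_\ell=v)$ and $1\le i,j<\ell$, the vertices $v_i,v_j$ are in the same $\epsilon_2$-segment if either (1) $|P[u,v_i]|,|P[u,v_j]|\le|P|/2$ and $\lfloor\log_{1+\epsilon_2}|P[u,v_i]|\rfloor=\lfloor\log_{1+\epsilon_2}|P[u,v_j]|\rfloor$, or (2) $|P[v_i,v]|,|P[v_j,v]|<|P|/2$ and $\lfloor\log_{1+\epsilon_2}|P[v_i,v]|\rfloor=\lfloor\log_{1+\epsilon_2}|P[v_j,v]|\rfloor$. This is an equivalence relation whose classes are contiguous subpaths; $u$ and $v$ belong to no segment. For $x\in P\setminus\{u,v\}$, $\mathrm{seg}(x,P)=P[v_l,v_r]$ where $v_l,v_r$ are the vertices of $x$'s class closest to $u$ and to $v$ respectively. *)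

theory Defs
  imports Complex_Main
begin

text \<open>Undirected weighted graph: vertex set V, edge set E (two-element vertex sets),
  weight function w on edges. Vertices of the path are referred to by their index.\<close>

definition is_path :: "'a set \<Rightarrow> 'a set set \<Rightarrow> 'a list \<Rightarrow> bool" where
  "is_path V E ps \<longleftrightarrow> ps \<noteq> [] \<and> distinct ps \<and> set ps \<subseteq> V \<and>
     (\<forall>i. Suc i < length ps \<longrightarrow> {ps ! i, ps ! Suc i} \<in> E)"

definition pref_len :: "('a set \<Rightarrow> real) \<Rightarrow> 'a list \<Rightarrow> nat \<Rightarrow> real" where
  "pref_len w ps i = (\<Sum>k<i. w {ps ! k, ps ! Suc k})"

definition path_len :: "('a set \<Rightarrow> real) \<Rightarrow> 'a list \<Rightarrow> real" where
  "path_len w ps = pref_len w ps (length ps - 1)"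

definition suf_len :: "('a set \<Rightarrow> real) \<Rightarrow> 'a list \<Rightarrow> nat \<Rightarrow> real" where
  "suf_len w ps i = path_len w ps - pref_len w ps i"

definition same_segment :: "real \<Rightarrow> ('a set \<Rightarrow> real) \<Rightarrow> 'a list \<Rightarrow> nat \<Rightarrow> nat \<Rightarrow> bool" where
  "same_segment eps w ps i j \<longleftrightarrow>
     1 \<le> i \<and> i < length ps - 1 \<and> 1 \<le> j \<and> j < length ps - 1 \<and>
     ((pref_len w ps i \<le> path_len w ps / 2 \<and> pref_len w ps j \<le> path_len w ps / 2 \<and>
       \<lfloor>log (1 + eps) (pref_len w ps i)\<rfloor> = \<lfloor>log (1 + eps) (pref_len w ps j)\<rfloor>) \<or>
      (suf_len w ps i < path_len w ps / 2 \<and> suf_len w ps j < path_len w ps / 2 \<and>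
       \<lfloor>log (1 + eps) (suf_len w ps i)\<rfloor> = \<lfloor>log (1 + eps) (suf_len w ps j)\<rfloor>))"

text \<open>seg(v_i, P) = P[v_l, v_r], where v_l (v_r) is the vertex of the class of v_i closest
  to u (to v); we return its weighted length.\<close>
definition seg_left :: "real \<Rightarrow> ('a set \<Rightarrow> real) \<Rightarrow> 'a list \<Rightarrow> nat \<Rightarrow> nat" where
  "seg_left eps w ps i = (LEAST j. same_segment eps w ps i j)"

definition seg_right :: "real \<Rightarrow> ('a set \<Rightarrow> real) \<Rightarrow> 'a list \<Rightarrow> nat \<Rightarrow> nat" where
  "seg_right eps w ps i = (GREATEST j. same_segment eps w ps i j)"

definition seg_len :: "real \<Rightarrow> ('a set \<Rightarrow> real) \<Rightarrow> 'a list \<Rightarrow> nat \<Rightarrow> real" where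
  "seg_len eps w ps i = pref_len w ps (seg_right eps w ps i) - pref_len w ps (seg_left eps w ps i)"

end

theory Submission
  imports Defs
begin

text \<open>All vertices of an \<open>\<epsilon>\<close>-segment have their distance to the nearer end of the path in one
  interval \<open>[(1 + \<epsilon>)^k, (1 + \<epsilon>)^(k+1))\<close>. The length of the segment is a difference of two such
  distances, hence less than \<open>\<epsilon> (1 + \<epsilon>)^k\<close>, which is at most \<open>\<epsilon>\<close> times the distance of any of
  its vertices.\<close>

lemma floor_log_eq_imp_diff_le:
  fixes b a c y :: real
  assumes b: "b > 1" and pos: "a > 0" "c > 0" "y > 0"
    and a: "\<lfloor>log b a\<rfloor> = \<lfloor>log b y\<rfloor>" and c: "\<lfloor>log b c\<rfloor> = \<lfloor>log b y\<rfloor>"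
  shows "a - c \<le> (b - 1) * y"
proof -
  define k where "k = \<lfloor>log b y\<rfloor>"
  have "log b a < k + 1"
    using a k_def by linarith
  then have "b powr log b a < b powr (k + 1)"
    using b by (intro powr_less_mono) auto
  then have "a < b powr (k + 1)"
    using b pos by simp
  also have "\<dots> = b * b powr k"
    using b by (simp add: powr_add)
  finally have a_less: "a < b * b powr k" .
  have le_of_floor: "b powr k \<le> z" if "z > 0" "\<lfloor>log b z\<rfloor> = k" for z
  proof -
    have "b powr k \<le> b powr log b z"
      using that b by (intro powr_mono) linarith+
    then show ?thesis
      using that b by simp
  qed
  have "a - c < b * b powr k - b powr k"
    using a_less le_of_floor[of c] c pos by (simp add: k_def)
  also have "\<dots> = (b - 1) * b powr k"
    by (simp add: algebra_simps)
  also have "\<dots> \<le> (b - 1) * y"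
    using le_of_floor[of y] b pos by (simp add: k_def)
  finally show ?thesis by linarith
qed

lemma pref_len_0 [simp]: "pref_len w ps 0 = 0"
  by (simp add: pref_len_def)

lemma pref_len_Suc: "pref_len w ps (Suc k) = pref_len w ps k + w {ps ! k, ps ! Suc k}"
  by (simp add: pref_len_def)

lemma pref_len_strict_mono:
  assumes pos: "\<And>k. Suc k < length ps \<Longrightarrow> 0 < w {ps ! k, ps ! Suc k}"
    and "j < j'" "j' < length ps"
  shows "pref_len w ps j < pref_len w ps j'"
  using assms(2,3)
proof (induction j' rule: less_Suc_induct)
  case (1 k)
  then show ?case using pos[of k] by (simp add: pref_len_Suc)
next
  case (2 i j k)
  then show ?case by linarith
qed

lemma is_path_edge_weight_pos:
  fixes w :: "'a set \<Rightarrow> real"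
  assumes "\<forall>e\<in>E. 1 \<le> w e" and "is_path V E ps" and "Suc k < length ps"
  shows "0 < w {ps ! k, ps ! Suc k}"
proof -
  have "{ps ! k, ps ! Suc k} \<in> E"
    using assms(2,3) by (simp add: is_path_def)
  then have "1 \<le> w {ps ! k, ps ! Suc k}"
    using assms(1) by blast
  then show ?thesis by linarith
qed

lemma same_segment_refl:
  assumes "1 \<le> i" "i < length ps - 1"
  shows "same_segment eps w ps i i"
  using assms by (auto simp: same_segment_def suf_len_def)

lemma same_segment_seg_left:
  assumes "same_segment eps w ps i i"
  shows "same_segment eps w ps i (seg_left eps w ps i)"
  unfolding seg_left_def by (rule LeastI[of "same_segment eps w ps i" i, OF assms])

lemma same_segment_seg_right:
  assumes "same_segment eps w ps i i"
  shows "same_segment eps w ps i (seg_right eps w ps i)"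
  unfolding seg_right_def
  by (rule GreatestI_nat[of "same_segment eps w ps i" i, OF assms, of "length ps"]) (auto simp: same_segment_def)

lemma same_segment_first_half:
  assumes "pref_len w ps i \<le> path_len w ps / 2" and "same_segment eps w ps i j"
  shows "\<lfloor>log (1 + eps) (pref_len w ps j)\<rfloor> = \<lfloor>log (1 + eps) (pref_len w ps i)\<rfloor>"
  using assms by (auto simp: same_segment_def suf_len_def)

lemma same_segment_second_half:
  assumes "\<not> pref_len w ps i \<le> path_len w ps / 2" and "same_segment eps w ps i j"
  shows "\<lfloor>log (1 + eps) (suf_len w ps j)\<rfloor> = \<lfloor>log (1 + eps) (suf_len w ps i)\<rfloor>"
  using assms by (auto simp: same_segment_def)

theorem lemma3p2:
  fixes V :: "'a set" and E :: "'a set set" and w :: "'a set \<Rightarrow> real"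
    and W eps2 :: real and ps :: "'a list" and i :: nat
  assumes edges: "\<forall>e\<in>E. \<exists>a b. a \<in> V \<and> b \<in> V \<and> a \<noteq> b \<and> e = {a, b}"
    and weights: "\<forall>e\<in>E. 1 \<le> w e \<and> w e \<le> W"
    and eps: "eps2 > 0"
    and path: "is_path V E ps"
    and inner: "0 < i" "i < length ps - 1"
  shows "seg_len eps2 w ps i \<le> eps2 * min (pref_len w ps i) (suf_len w ps i)"
proof -
  define l where "l = seg_left eps2 w ps i"
  define r where "r = seg_right eps2 w ps i"
  have refl: "same_segment eps2 w ps i i"
    using inner by (intro same_segment_refl) auto
  have l: "same_segment eps2 w ps i l" and r: "same_segment eps2 w ps i r"
    using same_segment_seg_left[OF refl] same_segment_seg_right[OF refl] by (simp_all add: l_def r_def)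
  have "\<And>k. Suc k < length ps \<Longrightarrow> 0 < w {ps ! k, ps ! Suc k}"
    using weights path by (intro is_path_edge_weight_pos) auto
  then have pos: "0 < pref_len w ps j" "0 < suf_len w ps j" if "same_segment eps2 w ps i j" for j
    using that pref_len_strict_mono[of ps w 0 j] pref_len_strict_mono[of ps w j "length ps - 1"]
    by (auto simp: same_segment_def suf_len_def path_len_def)
  have len: "seg_len eps2 w ps i = pref_len w ps r - pref_len w ps l"
            "seg_len eps2 w ps i = suf_len w ps l - suf_len w ps r"
    by (simp_all add: seg_len_def suf_len_def l_def r_def)
  show ?thesis
  proof (cases "pref_len w ps i \<le> path_len w ps / 2")
    case True
    have "pref_len w ps r - pref_len w ps l \<le> (1 + eps2 - 1) * pref_len w ps i"
      using eps pos[OF r] pos[OF l] pos[OF refl]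
      by (intro floor_log_eq_imp_diff_le same_segment_first_half[OF True] r l) auto
    moreover have "min (pref_len w ps i) (suf_len w ps i) = pref_len w ps i"
      using True by (simp add: suf_len_def)
    ultimately show ?thesis using len by simp
  next
    case False
    have "suf_len w ps l - suf_len w ps r \<le> (1 + eps2 - 1) * suf_len w ps i"
      using eps pos[OF r] pos[OF l] pos[OF refl]
      by (intro floor_log_eq_imp_diff_le same_segment_second_half[OF False] r l) auto
    moreover have "min (pref_len w ps i) (suf_len w ps i) = suf_len w ps i"
      using False by (simp add: suf_len_def)
    ultimately show ?thesis using len by simp
  qed
qed

end
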